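(* Let $K\ge2$, $P>0$ and $H_1\ge H_2\ge\cdots\ge H_K>0$. For $\boldsymbol\alpha=(\alpha_1,\dots,\alpha_K)$ with $0\le\alpha_k\le1$ and $\sum_{k=1}^K\alpha_k=1$ let $$r_k(\boldsymbol\alpha)=\log_2\Big(1+\frac{\alpha_k}{\sum_{i=1}^{k-1}\alpha_i+\frac{1}{PH_k}}\Big).$$ Then there exists a maximizer $\boldsymbol\alpha^\star$ of $\min_{k}r_k(\boldsymbol\alpha)$ over this set such that $r_1(\boldsymbol\alpha^\star)=r_2(\boldsymbol\alpha^\star)=\cdots=r_K(\boldsymbol\alpha^\star)=r_{\max}$, where $r_{\max}$ is the maximum value.
   Context: $K$-user downlink NOMA with superposition coding and successive interference cancellation: $\alpha_k$ is the fraction of total power $P$ given to Receiver $k$'s message, $H_k$ is its channel gain, and $r_k(\boldsymbol\alpha)$ is its achieved rate. *)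

theory Defs
  imports Complex_Main
begin

definition feasible :: "nat \<Rightarrow> (nat \<Rightarrow> real) \<Rightarrow> bool" where
  "feasible K \<alpha> \<longleftrightarrow> (\<forall>k\<in>{1..K}. 0 \<le> \<alpha> k \<and> \<alpha> k \<le> 1) \<and> (\<Sum>k=1..K. \<alpha> k) = 1"

definition rate :: "real \<Rightarrow> (nat \<Rightarrow> real) \<Rightarrow> (nat \<Rightarrow> real) \<Rightarrow> nat \<Rightarrow> real" where
  "rate P H \<alpha> k = log 2 (1 + \<alpha> k / ((\<Sum>i=1..<k. \<alpha> i) + 1 / (P * H k)))"

definition min_rate :: "nat \<Rightarrow> real \<Rightarrow> (nat \<Rightarrow> real) \<Rightarrow> (nat \<Rightarrow> real) \<Rightarrow> real" where
  "min_rate K P H \<alpha> = Min ((\<lambda>k. rate P H \<alpha> k) ` {1..K})"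

end

theory Submission
  imports Defs
begin

text \<open>
  With noise terms \<open>n k = 1 / (P H k)\<close>, user \<open>k\<close> attains rate \<open>log 2 t\<close> exactly when
  \<open>\<alpha> k = (t - 1) (\<alpha> 1 + \<dots> + \<alpha> (k - 1) + n k)\<close>.  Imposing this for all users determines the
  partial sums \<open>S k\<close> by \<open>S k = t S (k - 1) + (t - 1) n k\<close>; the total power \<open>S K\<close> is continuous
  in \<open>t\<close>, vanishes at \<open>t = 1\<close> and is at least \<open>1\<close> at \<open>t = 1 + 1 / n K\<close>, so some \<open>t \<ge> 1\<close> makes
  it \<open>1\<close>, which gives a feasible allocation with all rates equal to \<open>log 2 t\<close>.  Conversely, if every user of some
  allocation had rate above \<open>log 2 t\<close>, its partial sums would dominate \<open>S\<close> and its total power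
  would exceed \<open>S K = 1\<close>.
\<close>

primrec equal_rate_power :: "(nat \<Rightarrow> real) \<Rightarrow> real \<Rightarrow> nat \<Rightarrow> real" where
  "equal_rate_power n t 0 = 0"
| "equal_rate_power n t (Suc k) = t * equal_rate_power n t k + (t - 1) * n (Suc k)"

lemma equal_rate_power_at_one [simp]: "equal_rate_power n 1 k = 0"
  by (induction k) auto

lemma isCont_equal_rate_power: "isCont (\<lambda>t. equal_rate_power n t k) x"
  by (induction k) (auto intro!: continuous_intros)

lemma equal_rate_power_nonneg:
  assumes "t \<ge> 1" and "\<forall>k\<in>{1..m}. n k \<ge> 0"
  shows "equal_rate_power n t m \<ge> 0"
  using assms(2) by (induction m) (use assms(1) in auto)

lemma equal_rate_power_mono:
  assumes "t \<ge> 1" and "\<forall>k\<in>{1..m}. n k \<ge> 0" and "j \<le> m"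
  shows "equal_rate_power n t j \<le> equal_rate_power n t m"
  using assms(2,3)
proof (induction m)
  case (Suc m)
  show ?case
  proof (cases "j = Suc m")
    case False
    have "0 \<le> (t - 1) * (equal_rate_power n t m + n (Suc m))"
      using assms(1) Suc.prems(1) equal_rate_power_nonneg[OF assms(1), of m n] by simp
    then show ?thesis
      using Suc False by (simp add: algebra_simps)
  qed simp
qed simp

lemma equal_rate_power_eq_one:
  assumes "K \<ge> 1" and "\<forall>k\<in>{1..K}. n k \<ge> 0" and "n K > 0"
  obtains t where "t \<ge> 1" and "equal_rate_power n t K = 1"
proof -
  obtain K' where K': "K = Suc K'"
    using assms(1) by (cases K) auto
  define t\<^sub>1 where "t\<^sub>1 = 1 + 1 / n K"
  have "t\<^sub>1 \<ge> 1"
    using assms(3) by (simp add: t\<^sub>1_def)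
  moreover have "1 \<le> equal_rate_power n t\<^sub>1 K"
  proof -
    have "0 \<le> t\<^sub>1 * equal_rate_power n t\<^sub>1 K'"
      using \<open>t\<^sub>1 \<ge> 1\<close> assms(2) K' by (simp add: equal_rate_power_nonneg)
    moreover have "(t\<^sub>1 - 1) * n K = 1"
      using assms(3) by (simp add: t\<^sub>1_def)
    ultimately show ?thesis
      using K' by simp
  qed
  ultimately show ?thesis
    using IVT[of "\<lambda>t. equal_rate_power n t K" 1 1 t\<^sub>1] isCont_equal_rate_power that by auto
qed

definition equal_rate_alloc :: "(nat \<Rightarrow> real) \<Rightarrow> real \<Rightarrow> nat \<Rightarrow> real" where
  "equal_rate_alloc n t k = equal_rate_power n t k - equal_rate_power n t (k - 1)"

lemma equal_rate_alloc_Suc: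
  "equal_rate_alloc n t (Suc m) = (t - 1) * (equal_rate_power n t m + n (Suc m))"
  by (simp add: equal_rate_alloc_def algebra_simps)

lemma sum_equal_rate_alloc: "(\<Sum>i=1..m. equal_rate_alloc n t i) = equal_rate_power n t m"
  by (induction m) (simp_all add: equal_rate_alloc_def)

lemma feasible_equal_rate_alloc:
  assumes "t \<ge> 1" and "\<forall>k\<in>{1..K}. n k \<ge> 0" and "equal_rate_power n t K = 1"
  shows "feasible K (equal_rate_alloc n t)"
  unfolding feasible_def
proof (intro conjI ballI)
  fix k assume k: "k \<in> {1..K}"
  then obtain m where m: "k = Suc m"
    by (cases k) auto
  have n_nonneg: "\<forall>k\<in>{1..k}. n k \<ge> 0" "\<forall>k\<in>{1..m}. n k \<ge> 0"
    using assms(2) k m by auto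
  show "0 \<le> equal_rate_alloc n t k"
    using assms(1) n_nonneg k m equal_rate_power_nonneg[OF assms(1) n_nonneg(2)]
    by (simp add: equal_rate_alloc_Suc)
  show "equal_rate_alloc n t k \<le> 1"
    using equal_rate_power_mono[OF assms(1,2), of k] equal_rate_power_nonneg[OF assms(1) n_nonneg(2)]
      k m assms(3) by (simp add: equal_rate_alloc_def)
next
  show "(\<Sum>k=1..K. equal_rate_alloc n t k) = 1"
    using sum_equal_rate_alloc assms(3) by simp
qed

lemma rate_equal_rate_alloc:
  assumes "t \<ge> 1" and "k \<ge> 1" and "\<forall>i\<in>{1..k}. P * H i > 0"
  shows "rate P H (equal_rate_alloc (\<lambda>i. 1 / (P * H i)) t) k = log 2 t"
proof -
  obtain m where m: "k = Suc m"
    using assms(2) by (cases k) auto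
  define S where "S = equal_rate_power (\<lambda>i. 1 / (P * H i)) t m"
  have "S \<ge> 0"
    unfolding S_def using assms(1,3) m by (intro equal_rate_power_nonneg) (auto simp: less_imp_le)
  moreover have "1 / (P * H k) > 0"
    using assms(3) m by simp
  ultimately have "S + 1 / (P * H k) > 0"
    by linarith
  moreover have "(\<Sum>i=1..<k. equal_rate_alloc (\<lambda>i. 1 / (P * H i)) t i) = S"
    using m sum_equal_rate_alloc by (simp add: atLeastLessThanSuc_atLeastAtMost S_def)
  ultimately show ?thesis
    using m by (simp add: rate_def equal_rate_alloc_Suc S_def)
qed

lemma equal_rate_power_le_sum:
  assumes "t \<ge> 1" and "\<forall>k\<in>{1..m}. (t - 1) * ((\<Sum>i=1..<k. \<beta> i) + n k) \<le> \<beta> k"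
  shows "equal_rate_power n t m \<le> (\<Sum>i=1..m. \<beta> i)"
  using assms(2)
proof (induction m)
  case (Suc m)
  let ?B = "\<Sum>i=1..m. \<beta> i"
  have "equal_rate_power n t m \<le> ?B"
    using Suc by simp
  then have "equal_rate_power n t (Suc m) \<le> ?B + (t - 1) * (?B + n (Suc m))"
    using assms(1) mult_left_mono[of "equal_rate_power n t m" ?B "t - 1"]
    by (simp add: algebra_simps)
  also have "\<dots> \<le> ?B + \<beta> (Suc m)"
    using Suc.prems[rule_format, of "Suc m"] by (simp add: atLeastLessThanSuc_atLeastAtMost)
  finally show ?case
    by simp
qed simp

lemma log_less_rate_imp:
  assumes "t > 0" and "\<alpha> k \<ge> 0" and "(\<Sum>i=1..<k. \<alpha> i) + 1 / (P * H k) > 0"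
    and "log 2 t < rate P H \<alpha> k"
  shows "(t - 1) * ((\<Sum>i=1..<k. \<alpha> i) + 1 / (P * H k)) < \<alpha> k"
proof -
  let ?D = "(\<Sum>i=1..<k. \<alpha> i) + 1 / (P * H k)"
  have "1 + \<alpha> k / ?D > 0"
    using assms(2,3) by (simp add: add_pos_nonneg)
  then have "t - 1 < \<alpha> k / ?D"
    using assms(1,4) by (simp add: rate_def)
  then show ?thesis
    using assms(3) by (simp add: pos_less_divide_eq)
qed

lemma min_rate_le_equal_rate:
  assumes "K \<ge> 1" and "t \<ge> 1" and "\<forall>k\<in>{1..K}. P * H k > 0"
    and "equal_rate_power (\<lambda>i. 1 / (P * H i)) t K = 1" and "feasible K \<beta>"
  shows "min_rate K P H \<beta> \<le> log 2 t"
proof (rule ccontr)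
  define n where "n i = 1 / (P * H i)" for i
  define B where "B k = (\<Sum>i=1..<k. \<beta> i)" for k
  assume "\<not> min_rate K P H \<beta> \<le> log 2 t"
  moreover have "min_rate K P H \<beta> \<le> rate P H \<beta> k" if "k \<in> {1..K}" for k
    unfolding min_rate_def using that by (intro Min_le) auto
  ultimately have "log 2 t < rate P H \<beta> k" if "k \<in> {1..K}" for k
    using that by force
  moreover have "B k + n k > 0" if "k \<in> {1..K}" for k
    using that assms(3,5) unfolding B_def n_def feasible_def
    by (intro add_nonneg_pos sum_nonneg) auto
  ultimately have above: "(t - 1) * (B k + n k) < \<beta> k" if "k \<in> {1..K}" for k
    using that assms(2,5) unfolding B_def n_def feasible_def by (intro log_less_rate_imp) auto
  obtain K' where K': "K = Suc K'"
    using assms(1) by (cases K) auto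
  have "equal_rate_power n t K' \<le> B K"
    unfolding B_def K' atLeastLessThanSuc_atLeastAtMost
    using above K' by (intro equal_rate_power_le_sum assms(2)) (auto simp: B_def less_imp_le)
  then have "equal_rate_power n t K < B K + \<beta> K"
    using assms(2) mult_left_mono[of "equal_rate_power n t K'" "B K" "t - 1"] above[of K] K'
    by (simp add: algebra_simps)
  also have "B K + \<beta> K = 1"
    using assms(5) K' by (simp add: B_def feasible_def atLeastLessThanSuc_atLeastAtMost)
  finally show False
    using assms(4) by (simp add: n_def[abs_def])
qed

theorem lemma5:
  fixes K :: nat and P :: real and H :: "nat \<Rightarrow> real"
  assumes "K \<ge> 2" and "P > 0"
    and "\<And>i j. 1 \<le> i \<Longrightarrow> i \<le> j \<Longrightarrow> j \<le> K \<Longrightarrow> H i \<ge> H j"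
    and "\<And>k. 1 \<le> k \<Longrightarrow> k \<le> K \<Longrightarrow> H k > 0"
  shows "\<exists>\<alpha>s rmax. feasible K \<alpha>s
           \<and> min_rate K P H \<alpha>s = rmax
           \<and> (\<forall>\<alpha>. feasible K \<alpha> \<longrightarrow> min_rate K P H \<alpha> \<le> rmax)
           \<and> (\<forall>k\<in>{1..K}. rate P H \<alpha>s k = rmax)"
proof -
  define n where "n i = 1 / (P * H i)" for i
  have PH: "\<forall>k\<in>{1..K}. P * H k > 0"
    using assms(2,4) by simp
  then obtain t where t: "t \<ge> 1" "equal_rate_power n t K = 1"
    using assms(1) equal_rate_power_eq_one[of K n] by (force simp: n_def less_imp_le)
  define \<alpha> where "\<alpha> = equal_rate_alloc n t"
  have rates: "\<forall>k\<in>{1..K}. rate P H \<alpha> k = log 2 t"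
    using t(1) PH unfolding \<alpha>_def n_def by (auto intro!: rate_equal_rate_alloc)
  moreover have "min_rate K P H \<alpha> = log 2 t"
  proof -
    have "(\<lambda>k. rate P H \<alpha> k) ` {1..K} = {log 2 t}"
      using rates assms(1) by force
    then show ?thesis
      by (simp add: min_rate_def)
  qed
  moreover have "feasible K \<alpha>"
    using t PH unfolding \<alpha>_def n_def by (auto intro!: feasible_equal_rate_alloc less_imp_le)
  moreover have "\<forall>\<beta>. feasible K \<beta> \<longrightarrow> min_rate K P H \<beta> \<le> log 2 t"
    using assms(1) t PH unfolding n_def by (auto intro!: min_rate_le_equal_rate)
  ultimately show ?thesis
    by blast
qed

end
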